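(* Let $n$ be a positive integer and $k$ an integer with $1<k<n$ and $\gcd(k,n)=1$. If $n$ is odd, there is at most one quasigroup operation on $\{1,2,\dots,n\}$ that is idempotent and $k$-translatable with respect to the ordering $1,2,\dots,n$. If $n$ is even, there is no such quasigroup.
   Context: A groupoid on $\{1,\dots,n\}$ is $k$-translatable with respect to the ordering $1,\dots,n$ if $i\cdot j=(i-1)\cdot(j-k)$ for all $i\in\{2,\dots,n\}$, $j\in\{1,\dots,n\}$, where $j-k$ is taken modulo $n$ in $\{1,\dots,n\}$ (each Cayley-table row is the previous row with its last $k$ entries moved to the front). Idempotent means $x\cdot x=x$ for all $x$. *)

theory Defs
  imports Main
begin

text \<open>Groupoids on the carrier {1..n} are modelled as binary operations
  on nat, considered only on {1..n}.\<close>

definition closed_op :: "nat \<Rightarrow> (nat \<Rightarrow> nat \<Rightarrow> nat) \<Rightarrow> bool" where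
  "closed_op n f \<longleftrightarrow> (\<forall>a\<in>{1..n}. \<forall>b\<in>{1..n}. f a b \<in> {1..n})"

definition is_quasigroup :: "nat \<Rightarrow> (nat \<Rightarrow> nat \<Rightarrow> nat) \<Rightarrow> bool" where
  "is_quasigroup n f \<longleftrightarrow> closed_op n f \<and>
     (\<forall>a\<in>{1..n}. \<forall>b\<in>{1..n}. (\<exists>!x. x \<in> {1..n} \<and> f a x = b) \<and> (\<exists>!y. y \<in> {1..n} \<and> f y a = b))"

definition is_idempotent :: "nat \<Rightarrow> (nat \<Rightarrow> nat \<Rightarrow> nat) \<Rightarrow> bool" where
  "is_idempotent n f \<longleftrightarrow> (\<forall>x\<in>{1..n}. f x x = x)"

definition mod1 :: "nat \<Rightarrow> int \<Rightarrow> nat" where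
  "mod1 n m = nat ((m - 1) mod int n) + 1"

definition k_translatable :: "nat \<Rightarrow> nat \<Rightarrow> (nat \<Rightarrow> nat \<Rightarrow> nat) \<Rightarrow> bool" where
  "k_translatable n k f \<longleftrightarrow>
     (\<forall>i\<in>{2..n}. \<forall>j\<in>{1..n}. f i j = f (i - 1) (mod1 n (int j - int k)))"

end

theory Submission
  imports Defs
begin

text \<open>By translatability every row of the Cayley table is a cyclic shift of the first one:
  a * b = 1 * (b - (a - 1) k) modulo n. Hence idempotence says that the element a sits in the
  first row at column c(a) = a - (a - 1) k. Since 1 * c(a) = a, the map c is injective, hence a
  permutation of {1..n}; so the first row, and with it the whole table, is determined. If n is
  even, then k is odd by coprimality, and c(1) = c(1 + n/2) contradicts injectivity.\<close>

lemma mod1_in_range: "0 < n \<Longrightarrow> mod1 n m \<in> {1..n}"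
proof -
  assume "0 < n"
  then have "(m - 1) mod int n < int n" "0 \<le> (m - 1) mod int n" by simp_all
  then show ?thesis unfolding mod1_def by auto
qed

lemma mod1_of_nat: "b \<in> {1..n} \<Longrightarrow> mod1 n (int b) = b"
  unfolding mod1_def by (auto simp: mod_pos_pos_trivial)

lemma int_mod1_mod: "0 < n \<Longrightarrow> int (mod1 n m) mod int n = m mod int n"
proof -
  assume "0 < n"
  then have "int (mod1 n m) = (m - 1) mod int n + 1" unfolding mod1_def by simp
  then show ?thesis by (simp add: mod_add_left_eq)
qed

lemma mod1_cong: "m mod int n = m' mod int n \<Longrightarrow> mod1 n m = mod1 n m'"
  unfolding mod1_def by (metis mod_diff_left_eq)

lemma k_translatable_row:
  assumes n: "0 < n" and t: "k_translatable n k f"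
  shows "a \<in> {1..n} \<Longrightarrow> b \<in> {1..n} \<Longrightarrow> f a b = f 1 (mod1 n (int b - (int a - 1) * int k))"
proof (induction a arbitrary: b)
  case 0
  then show ?case by simp
next
  case (Suc a)
  show ?case
  proof (cases "a = 0")
    case True
    with Suc.prems show ?thesis by (simp add: mod1_of_nat)
  next
    case False
    define b' where "b' = mod1 n (int b - int k)"
    have b': "b' \<in> {1..n}"
      unfolding b'_def using mod1_in_range n by blast
    have "f (Suc a) b = f a b'"
      using t Suc.prems False unfolding k_translatable_def b'_def by auto
    also have "\<dots> = f 1 (mod1 n (int b' - (int a - 1) * int k))"
      using Suc.IH Suc.prems False b' by auto
    also have "\<dots> = f 1 (mod1 n (int b - (int (Suc a) - 1) * int k))"
    proof (intro arg_cong[where f = "f 1"] mod1_cong)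
      have "(int b' - (int a - 1) * int k) mod int n = (int b - int k - (int a - 1) * int k) mod int n"
        using int_mod1_mod[OF n, of "int b - int k"] unfolding b'_def by (metis mod_diff_left_eq)
      then show "(int b' - (int a - 1) * int k) mod int n
          = (int b - (int (Suc a) - 1) * int k) mod int n"
        by (simp add: algebra_simps)
    qed
    finally show ?thesis .
  qed
qed

definition diagonal_column :: "nat \<Rightarrow> nat \<Rightarrow> nat \<Rightarrow> nat" where
  "diagonal_column n k a = mod1 n (int a - (int a - 1) * int k)"

lemma diagonal_column_in_range: "0 < n \<Longrightarrow> diagonal_column n k a \<in> {1..n}"
  unfolding diagonal_column_def by (rule mod1_in_range)

lemma first_row_diagonal_column:
  assumes n: "0 < n" and t: "k_translatable n k f" and i: "is_idempotent n f" and a: "a \<in> {1..n}"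
  shows "f 1 (diagonal_column n k a) = a"
proof -
  have "f a a = a" using a i unfolding is_idempotent_def by blast
  moreover have "f a a = f 1 (diagonal_column n k a)"
    using k_translatable_row[OF n t a a] unfolding diagonal_column_def .
  ultimately show ?thesis by simp
qed

lemma inj_on_diagonal_column:
  assumes "0 < n" and "k_translatable n k f" and "is_idempotent n f"
  shows "inj_on (diagonal_column n k) {1..n}"
  by (metis first_row_diagonal_column[OF assms] inj_onI)

lemma diagonal_column_image:
  assumes n: "0 < n" and t: "k_translatable n k f" and i: "is_idempotent n f"
  shows "diagonal_column n k ` {1..n} = {1..n}"
proof -
  have "diagonal_column n k ` {1..n} \<subseteq> {1..n}"
    using diagonal_column_in_range[OF n] by blast
  moreover have "card (diagonal_column n k ` {1..n}) = card {1..n}"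
    using card_image[OF inj_on_diagonal_column[OF n t i]] .
  ultimately show ?thesis by (simp add: card_subset_eq)
qed

lemma idempotent_translatable_unique:
  assumes n: "0 < n"
    and tf: "k_translatable n k f" and i_f: "is_idempotent n f"
    and tg: "k_translatable n k g" and i_g: "is_idempotent n g"
    and a: "a \<in> {1..n}" and b: "b \<in> {1..n}"
  shows "f a b = g a b"
proof -
  have first_row: "f 1 c = g 1 c" if "c \<in> {1..n}" for c
  proof -
    obtain x where "x \<in> {1..n}" and "c = diagonal_column n k x"
      using diagonal_column_image[OF n tf i_f] \<open>c \<in> {1..n}\<close> by blast
    then show ?thesis
      using first_row_diagonal_column[OF n tf i_f] first_row_diagonal_column[OF n tg i_g] by simp
  qed
  show ?thesis
    using k_translatable_row[OF n tf a b] k_translatable_row[OF n tg a b]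
      first_row[OF mod1_in_range[OF n]] by simp
qed

lemma diagonal_column_half_period:
  assumes n: "n = 2 * m" and k: "odd k"
  shows "diagonal_column n k 1 = diagonal_column n k (1 + m)"
  unfolding diagonal_column_def
proof (rule mod1_cong)
  obtain j where j: "k = 2 * j + 1" using k oddE by blast
  have "int (1 + m) - (int (1 + m) - 1) * int k = 1 + (- int j) * int n"
    using j n by (simp add: algebra_simps)
  then show "(int 1 - (int 1 - 1) * int k) mod int n
      = (int (1 + m) - (int (1 + m) - 1) * int k) mod int n"
    by (simp only: mod_mult_self1) simp
qed

lemma no_idempotent_translatable_even:
  assumes n: "0 < n" "even n" and k: "odd k"
  shows "\<not> (is_idempotent n f \<and> k_translatable n k f)"
proof
  assume "is_idempotent n f \<and> k_translatable n k f"
  then have inj: "inj_on (diagonal_column n k) {1..n}"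
    using inj_on_diagonal_column n(1) by blast
  obtain m where m: "n = 2 * m" using n(2) by blast
  have "1 \<in> {1..n}" "1 + m \<in> {1..n}" "0 < m" using m n(1) by auto
  with inj_onD[OF inj diagonal_column_half_period[OF m k]] show False by simp
qed

theorem theorem8p9:
  fixes n k :: nat
  assumes "0 < n" and "1 < k" and "k < n" and "gcd k n = 1"
  shows "(odd n \<longrightarrow> (\<forall>f g. is_quasigroup n f \<and> is_idempotent n f \<and> k_translatable n k f \<and>
                              is_quasigroup n g \<and> is_idempotent n g \<and> k_translatable n k g \<longrightarrow>
                              (\<forall>a\<in>{1..n}. \<forall>b\<in>{1..n}. f a b = g a b)))
       \<and> (even n \<longrightarrow> \<not> (\<exists>f. is_quasigroup n f \<and> is_idempotent n f \<and> k_translatable n k f))"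
proof (intro conjI impI allI ballI)
  fix f g a b
  assume "is_quasigroup n f \<and> is_idempotent n f \<and> k_translatable n k f \<and>
          is_quasigroup n g \<and> is_idempotent n g \<and> k_translatable n k g"
    and "a \<in> {1..n}" and "b \<in> {1..n}"
  then show "f a b = g a b"
    using idempotent_translatable_unique[OF assms(1)] by blast
next
  assume even: "even n"
  have "odd k"
  proof
    assume "even k"
    with even have "2 dvd gcd k n" by simp
    with assms(4) show False by simp
  qed
  then show "\<not> (\<exists>f. is_quasigroup n f \<and> is_idempotent n f \<and> k_translatable n k f)"
    using no_idempotent_translatable_even[OF assms(1) even] by blast
qed

end
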